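(* Let $0<r\le1$ and $0<\alpha\le\frac12$. Let $a:\mathbb{Z}^n\to\mathbb{C}$ satisfy $|a(\xi)|\le C\langle\xi\rangle^m$ for all $\xi\in\mathbb{Z}^n$. Assume $1<p_1\le2$, $q_1=(\alpha+\frac1{p_1'})^{-1}$, and $m<-\frac nr-\alpha n$. Then the Fourier multiplier $T_a$ is $r$-nuclear on $B^w_{p_1,q_1}(\mathbb{T}^n)$ for every $w\in\mathbb{R}$, and its nuclear trace is $\mathrm{Tr}(T_a)=\sum_{\xi\in\mathbb{Z}^n}a(\xi)$.
   Context: $\widehat f(\xi)=\int_{\mathbb{T}^n}e^{-i2\pi x\cdot\xi}f(x)dx$, $\langle\xi\rangle=(1+|\xi|^2)^{1/2}$. $T_au(x)=\sum_{\xi\in\mathbb{Z}^n}e^{i2\pi x\cdot\xi}a(\xi)\widehat u(\xi)$. Periodic Besov spaces: $\|f\|_{B^w_{p,q}}=\big(\sum_{m\ge0}2^{mwq}\|\sum_{2^m\le|\xi|<2^{m+1}}e^{i2\pi x\cdot\xi}\widehat f(\xi)\|^q_{L^p(\mathbb{T}^n)}\big)^{1/q}$. $p'$ is the conjugate exponent. $T:E\to E$ is $r$-nuclear if $T=\sum_ne'_n(\cdot)y_n$ with $\sum_n\|e'_n\|^r_{E'}\|y_n\|^r_E<\infty$; on a space with the approximation property its nuclear trace is $\sum_ne'_n(y_n)$. *)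

theory Defs
  imports "HOL-Analysis.Analysis"
begin

text \<open>Lattice points xi in Z^n are modelled as int^'n (n = CARD('n)); points of the
torus T^n are represented by the unit cube [0,1]^n in real^'n.  A (periodic) distribution
is identified with its Fourier coefficient function  int^'n => complex.\<close>

definition zabs :: "int^'n \<Rightarrow> real" where
  "zabs \<xi> = sqrt (\<Sum>i\<in>UNIV. (real_of_int (\<xi>$i))\<^sup>2)"

definition jbr :: "int^'n \<Rightarrow> real" where
  "jbr \<xi> = sqrt (1 + (zabs \<xi>)\<^sup>2)"

definition zdot :: "real^'n \<Rightarrow> int^'n \<Rightarrow> real" where
  "zdot x \<xi> = (\<Sum>i\<in>UNIV. x$i * real_of_int (\<xi>$i))"

definition unit_cube :: "(real^'n) set" where
  "unit_cube = {x. \<forall>i. 0 \<le> x$i \<and> x$i \<le> 1}"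

definition shell :: "nat \<Rightarrow> (int^'n) set" where
  "shell k = {\<xi>. (if k = 0 then True else 2 ^ k \<le> zabs \<xi>) \<and> zabs \<xi> < 2 ^ (k + 1)}"

definition block :: "(int^'n \<Rightarrow> complex) \<Rightarrow> nat \<Rightarrow> real^'n \<Rightarrow> complex" where
  "block f k x = (\<Sum>\<xi>\<in>shell k. exp (\<i> * complex_of_real (2 * pi * zdot x \<xi>)) * f \<xi>)"

definition Lp_norm_torus :: "real \<Rightarrow> (real^'n \<Rightarrow> complex) \<Rightarrow> real" where
  "Lp_norm_torus p g = (integral unit_cube (\<lambda>x. norm (g x) powr p)) powr (1 / p)"

definition besov_term :: "real \<Rightarrow> real \<Rightarrow> real \<Rightarrow> (int^'n \<Rightarrow> complex) \<Rightarrow> nat \<Rightarrow> real" where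
  "besov_term w p q f k = (2 powr (real k * w * q)) * (Lp_norm_torus p (block f k)) powr q"

definition besov_space :: "real \<Rightarrow> real \<Rightarrow> real \<Rightarrow> (int^'n \<Rightarrow> complex) set" where
  "besov_space w p q = {f. summable (besov_term w p q f)}"

definition besov_norm :: "real \<Rightarrow> real \<Rightarrow> real \<Rightarrow> (int^'n \<Rightarrow> complex) \<Rightarrow> real" where
  "besov_norm w p q f = (suminf (besov_term w p q f)) powr (1 / q)"

definition dual_space :: "('a \<Rightarrow> complex) set \<Rightarrow> (('a \<Rightarrow> complex) \<Rightarrow> real)
    \<Rightarrow> ((('a \<Rightarrow> complex) \<Rightarrow> complex) set)" where
  "dual_space E N = {e. (\<forall>u\<in>E. \<forall>v\<in>E. e (\<lambda>t. u t + v t) = e u + e v)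
       \<and> (\<forall>u\<in>E. \<forall>c. e (\<lambda>t. c * u t) = c * e u)
       \<and> (\<exists>B. \<forall>u\<in>E. norm (e u) \<le> B * N u)}"

definition dual_norm :: "('a \<Rightarrow> complex) set \<Rightarrow> (('a \<Rightarrow> complex) \<Rightarrow> real)
    \<Rightarrow> (('a \<Rightarrow> complex) \<Rightarrow> complex) \<Rightarrow> real" where
  "dual_norm E N e = Sup {norm (e u) | u. u \<in> E \<and> N u \<le> 1}"

definition nuclear_rep :: "real \<Rightarrow> ('a \<Rightarrow> complex) set \<Rightarrow> (('a \<Rightarrow> complex) \<Rightarrow> real)
    \<Rightarrow> (('a \<Rightarrow> complex) \<Rightarrow> ('a \<Rightarrow> complex))
    \<Rightarrow> (nat \<Rightarrow> ('a \<Rightarrow> complex) \<Rightarrow> complex) \<Rightarrow> (nat \<Rightarrow> ('a \<Rightarrow> complex)) \<Rightarrow> bool" where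
  "nuclear_rep r E N T e y \<longleftrightarrow>
     (\<forall>k. e k \<in> dual_space E N) \<and> (\<forall>k. y k \<in> E)
     \<and> summable (\<lambda>k. (dual_norm E N (e k)) powr r * (N (y k)) powr r)
     \<and> (\<forall>u\<in>E. T u \<in> E \<and>
          (\<lambda>K. N (\<lambda>t. T u t - (\<Sum>k<K. e k u * y k t))) \<longlonglongrightarrow> 0)"

definition r_nuclear :: "real \<Rightarrow> ('a \<Rightarrow> complex) set \<Rightarrow> (('a \<Rightarrow> complex) \<Rightarrow> real)
    \<Rightarrow> (('a \<Rightarrow> complex) \<Rightarrow> ('a \<Rightarrow> complex)) \<Rightarrow> bool" where
  "r_nuclear r E N T \<longleftrightarrow> (\<exists>e y. nuclear_rep r E N T e y)"

definition fourier_mult :: "(int^'n \<Rightarrow> complex) \<Rightarrow> (int^'n \<Rightarrow> complex) \<Rightarrow> (int^'n \<Rightarrow> complex)" where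
  "fourier_mult a u = (\<lambda>\<xi>. a \<xi> * u \<xi>)"

end

theory Submission
  imports Defs
begin

text \<open>
  For \<open>\<xi>\<close> in the \<open>k\<close>-th dyadic shell, orthogonality of the characters and
  \<open>L\<^sup>1 \<le> L\<^sup>p\<close> on the unit cube give \<open>|f(\<xi>)| \<le> \<parallel>block\<^sub>k f\<parallel>\<^sub>p \<le> 2\<^sup>-\<^sup>k\<^sup>w \<parallel>f\<parallel>\<close>.
  Hence the evaluation functional \<open>u \<mapsto> a(\<xi>) u(\<xi>)\<close> has dual norm at most \<open>|a(\<xi>)| 2\<^sup>-\<^sup>k\<^sup>w\<close>,
  while the unit coefficient vector \<open>\<delta>\<^sub>\<xi>\<close> has norm \<open>2\<^sup>k\<^sup>w\<close>; so
  \<open>T\<^sub>a = \<Sum>\<^sub>\<xi> a(\<xi>) u(\<xi>) \<delta>\<^sub>\<xi>\<close> is an \<open>r\<close>-nuclear representation as soon as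
  \<open>\<Sum>\<^sub>\<xi> |a(\<xi>)|\<^sup>r \<le> C\<^sup>r \<Sum>\<^sub>\<xi> \<langle>\<xi>\<rangle>\<^sup>m\<^sup>r < \<infinity>\<close>, i.e. \<open>m r < -n\<close>.

  For the trace, let \<open>T\<^sub>a = \<Sum>\<^sub>k e\<^sub>k \<otimes> y\<^sub>k\<close> be any \<open>1\<close>-nuclear representation.
  Evaluating at \<open>\<delta>\<^sub>\<xi>\<close> and reading off the \<open>\<xi>\<close>-th coefficient gives
  \<open>\<Sum>\<^sub>k y\<^sub>k(\<xi>) e\<^sub>k(\<delta>\<^sub>\<xi>) = a(\<xi>)\<close>. Truncating every \<open>y\<^sub>k\<close> to the first \<open>K\<close> shells
  therefore turns \<open>\<Sum>\<^sub>k e\<^sub>k(y\<^sub>k)\<close> into a partial sum of \<open>\<Sum>\<^sub>\<xi> a(\<xi>)\<close>; the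
  truncations converge in norm and are dominated by \<open>\<parallel>e\<^sub>k\<parallel> \<parallel>y\<^sub>k\<parallel>\<close>, so Tannery's
  theorem lets \<open>K \<rightarrow> \<infinity>\<close>.
\<close>

section \<open>Orthogonality of characters on the torus\<close>

lemma lborel_integral_prod_Basis:
  fixes h :: "'a::euclidean_space \<Rightarrow> real \<Rightarrow> complex"
  assumes int: "\<And>b. b \<in> Basis \<Longrightarrow> integrable lborel (h b)"
  shows "integrable lborel (\<lambda>x::'a. \<Prod>b\<in>Basis. h b (x \<bullet> b))"
    and "(\<integral>x. (\<Prod>b\<in>Basis. h b (x \<bullet> b)) \<partial>lborel) = (\<Prod>b\<in>Basis. integral\<^sup>L lborel (h b))"
proof -
  interpret product_sigma_finite "\<lambda>_::'a. lborel :: real measure" by standard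
  have [measurable]: "\<And>b. b \<in> Basis \<Longrightarrow> h b \<in> borel_measurable borel"
    using int by (simp add: borel_measurable_integrable)
  have coords: "(\<Prod>b\<in>Basis. h b ((\<Sum>c\<in>Basis. f c *\<^sub>R c) \<bullet> b)) = (\<Prod>b\<in>Basis. h b (f b))" for f
    by (intro prod.cong refl) (simp add: inner_sum_left inner_Basis if_distrib sum.delta cong: if_cong)
  have meas: "(\<lambda>x::'a. \<Prod>b\<in>Basis. h b (x \<bullet> b)) \<in> borel_measurable borel"
    by measurable
  have emb: "(\<lambda>f. \<Sum>b\<in>Basis. f b *\<^sub>R b) \<in> measurable (\<Pi>\<^sub>M b\<in>Basis. (lborel::real measure)) (borel :: 'a measure)"
    by measurable
  have prod_int: "integrable (\<Pi>\<^sub>M b\<in>Basis. lborel) (\<lambda>f. \<Prod>b\<in>Basis. h b (f b))"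
    by (rule product_integrable_prod) (auto intro: int)
  show "integrable lborel (\<lambda>x::'a. \<Prod>b\<in>Basis. h b (x \<bullet> b))"
    by (subst lborel_eq, subst integrable_distr_eq[OF emb meas]) (simp add: coords prod_int)
  have "(\<integral>x. (\<Prod>b\<in>Basis. h b (x \<bullet> b)) \<partial>lborel) =
      (\<integral>f. (\<Prod>b\<in>Basis. h b ((\<Sum>c\<in>Basis. f c *\<^sub>R c) \<bullet> b)) \<partial>(\<Pi>\<^sub>M b\<in>Basis. lborel))"
    by (subst lborel_eq, subst integral_distr[OF emb meas]) simp
  also have "\<dots> = (\<Prod>b\<in>Basis. integral\<^sup>L lborel (h b))"
    unfolding coords by (rule product_integral_prod) (auto intro: int)
  finally show "(\<integral>x. (\<Prod>b\<in>Basis. h b (x \<bullet> b)) \<partial>lborel) = (\<Prod>b\<in>Basis. integral\<^sup>L lborel (h b))" .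
qed

lemma integral_01_exp_mult:
  assumes "a \<noteq> 0"
  shows "integral {0..1} (\<lambda>t. exp (a * complex_of_real t)) = (exp a - 1) / a"
proof -
  have "((\<lambda>x. exp (a * x) / a) has_vector_derivative exp (a * t)) (at t within {0..1})" for t
    using assms
    by (intro derivative_eq_intros has_complex_derivative_imp_has_vector_derivative [unfolded o_def] | simp)+
  then have "((\<lambda>t. exp (a * of_real t)) has_integral exp (a * complex_of_real 1) / a - exp (a * of_real 0) / a) {0..1}"
    by (intro fundamental_theorem_of_calculus) auto
  then show ?thesis
    by (simp add: diff_divide_distrib integral_unique)
qed

lemma lborel_integral_exp_2pi_int:
  fixes c :: real
  assumes "c \<in> \<int>"
  defines "g \<equiv> \<lambda>t::real. indicator {0..1} t *\<^sub>R exp ((2 * pi * c * \<i>) * complex_of_real t)"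
  shows "integrable lborel g" and "integral\<^sup>L lborel g = (if c = 0 then 1 else 0)"
proof -
  have si: "set_integrable lborel {0..1::real} (\<lambda>t. exp ((2 * pi * c * \<i>) * complex_of_real t))"
    unfolding set_integrable_def by (intro borel_integrable_compact continuous_intros) auto
  then show "integrable lborel g" unfolding g_def set_integrable_def .
  have "integral\<^sup>L lborel g = integral {0..1} (\<lambda>t. exp ((2 * pi * c * \<i>) * complex_of_real t))"
    using set_borel_integral_eq_integral(2)[OF si] unfolding g_def set_lebesgue_integral_def by simp
  also have "\<dots> = (if c = 0 then 1 else 0)"
  proof (cases "c = 0")
    case False
    have "exp (2 * pi * c * \<i>) = 1"
      using exp_integer_2pi[of "of_real c"] assms by (simp add: mult_ac)
    with False show ?thesis by (simp add: integral_01_exp_mult)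
  qed simp
  finally show "integral\<^sup>L lborel g = (if c = 0 then 1 else 0)" .
qed

lemma prod_Basis_vec: "(\<Prod>b\<in>(Basis::(real^'n) set). f b) = (\<Prod>i\<in>UNIV. f (axis i 1))"
proof -
  have inj: "inj (\<lambda>i::'n. axis i (1::real))" by (auto intro!: injI simp: axis_eq_axis)
  have B: "(Basis :: (real^'n) set) = range (\<lambda>i. axis i 1)"
    by (auto simp: Basis_vec_def)
  show ?thesis unfolding B by (simp add: prod.reindex[OF inj])
qed

lemma unit_cube_cbox: "unit_cube = cbox (0::real^'n) 1"
  by (auto simp: unit_cube_def mem_box_cart)

definition torus_char :: "real^'n \<Rightarrow> int^'n \<Rightarrow> complex" where
  "torus_char x \<xi> = exp (\<i> * complex_of_real (2 * pi * zdot x \<xi>))"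

lemma norm_torus_char [simp]: "norm (torus_char x \<xi>) = 1"
  unfolding torus_char_def by (rule norm_exp_i_times)

lemma torus_char_mult_cnj: "torus_char x \<eta> * cnj (torus_char x \<xi>) = torus_char x (\<eta> - \<xi>)"
proof -
  have diff: "zdot x (\<eta> - \<xi>) = zdot x \<eta> - zdot x \<xi>"
    by (simp add: zdot_def algebra_simps sum_subtractf)
  show ?thesis
    by (simp add: torus_char_def exp_cnj diff exp_add[symmetric] algebra_simps)
qed

lemma continuous_on_torus_char [continuous_intros]: "continuous_on S (\<lambda>x. torus_char x \<xi>)"
  unfolding torus_char_def zdot_def by (intro continuous_intros)

text \<open>The cube integral is the product of one-dimensional integrals of \<open>e\<^sup>2\<^sup>\<pi>\<^sup>i\<^sup>\<eta>\<^sub>j\<^sup>t\<close>.\<close>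
lemma has_integral_torus_char:
  fixes \<eta> :: "int^'n"
  shows "((\<lambda>x. torus_char x \<eta>) has_integral (if \<eta> = 0 then 1 else 0)) unit_cube"
proof -
  define v :: "real^'n" where "v = (\<chi> i. real_of_int (\<eta> $ i))"
  define h where "h = (\<lambda>b::real^'n. \<lambda>t::real. indicator {0..1} t *\<^sub>R exp ((2 * pi * (v \<bullet> b) * \<i>) * complex_of_real t))"
  have vb: "\<And>b. b \<in> Basis \<Longrightarrow> v \<bullet> b \<in> \<int>"
    by (auto simp: Basis_vec_def v_def inner_axis)
  have int: "\<And>b. b \<in> Basis \<Longrightarrow> integrable lborel (h b)"
    unfolding h_def by (rule lborel_integral_exp_2pi_int(1)[OF vb])
  have prod_eq: "(\<Prod>b\<in>Basis. h b (x \<bullet> b)) = indicator (cbox 0 1) x *\<^sub>R torus_char x \<eta>" for x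
  proof -
    have "(\<Prod>b\<in>Basis. h b (x \<bullet> b)) = (\<Prod>b\<in>Basis. complex_of_real (indicator {0..1} (x \<bullet> b))) *
       exp (\<Sum>b\<in>Basis. (2 * pi * (v \<bullet> b) * \<i>) * complex_of_real (x \<bullet> b))"
      by (simp add: h_def prod.distrib scaleR_conv_of_real exp_sum)
    also have "(\<Prod>b\<in>Basis. complex_of_real (indicator {0..1} (x \<bullet> b))) = indicator (cbox 0 1) x"
      by (auto simp: indicator_def mem_box_cart prod_Basis_vec inner_axis prod_zero_iff)
    also have "(\<Sum>b\<in>Basis. (2 * pi * (v \<bullet> b) * \<i>) * complex_of_real (x \<bullet> b))
        = \<i> * complex_of_real (2 * pi * (\<Sum>b\<in>Basis. (x \<bullet> b) * (v \<bullet> b)))"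
      by (simp add: sum_distrib_left mult_ac)
    also have "(\<Sum>b\<in>Basis. (x \<bullet> b) * (v \<bullet> b)) = x \<bullet> v"
      by (rule euclidean_inner[symmetric])
    also have "x \<bullet> v = zdot x \<eta>"
      by (simp add: zdot_def inner_vec_def v_def)
    finally show ?thesis by (simp add: indicator_def scaleR_conv_of_real torus_char_def)
  qed
  have "(\<integral>x. (\<Prod>b\<in>Basis. h b (x \<bullet> b)) \<partial>lborel) = (\<Prod>b\<in>Basis. integral\<^sup>L lborel (h b))"
    by (rule lborel_integral_prod_Basis(2)[OF int])
  also have "\<dots> = (\<Prod>b\<in>Basis. (if v \<bullet> b = 0 then 1 else 0))"
    by (intro prod.cong refl, unfold h_def, rule lborel_integral_exp_2pi_int(2)[OF vb])
  also have "\<dots> = (if \<eta> = 0 then 1 else 0)"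
  proof -
    have "(\<forall>b\<in>Basis. v \<bullet> b = 0) \<longleftrightarrow> \<eta> = 0"
      by (auto simp: Basis_vec_def v_def inner_axis vec_eq_iff)
    then show ?thesis by (auto simp: prod_zero_iff)
  qed
  moreover have "integrable lborel (\<lambda>x::real^'n. \<Prod>b\<in>Basis. h b (x \<bullet> b))"
    by (rule lborel_integral_prod_Basis(1)[OF int])
  ultimately have "((\<lambda>x. indicator (cbox 0 1) x *\<^sub>R torus_char x \<eta>) has_integral (if \<eta> = 0 then 1 else 0)) UNIV"
    using has_integral_integral_lborel by (fastforce simp: prod_eq)
  then have "((\<lambda>x. if x \<in> cbox 0 1 then torus_char x \<eta> else 0) has_integral (if \<eta> = 0 then 1 else 0)) UNIV"
    by (rule has_integral_eq[rotated]) (auto simp: indicator_def)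
  then show ?thesis
    unfolding unit_cube_cbox has_integral_restrict_UNIV .
qed

lemma integral_unit_cube_const [simp]: "integral (unit_cube :: (real^'n) set) (\<lambda>x. c) = (c::real)"
proof -
  have "(0::real^'n) \<in> cbox 0 1" by (simp add: mem_box_cart)
  then have "cbox (0::real^'n) 1 \<noteq> {}" by blast
  then show ?thesis unfolding unit_cube_cbox by (simp add: content_cbox_cart)
qed

lemma integrable_continuous_unit_cube:
  "continuous_on (unit_cube :: (real^'n) set) f \<Longrightarrow> (f :: _ \<Rightarrow> 'b::banach) integrable_on unit_cube"
  unfolding unit_cube_cbox by (rule integrable_continuous)

lemma integrable_norm_powr_unit_cube:
  fixes g :: "real^'n \<Rightarrow> 'b::real_normed_vector"
  assumes "continuous_on unit_cube g" "p > 0"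
  shows "(\<lambda>x. norm (g x) powr p) integrable_on unit_cube"
  by (intro integrable_continuous_unit_cube continuous_on_powr') (use assms in \<open>auto intro!: continuous_intros\<close>)

text \<open>Young's inequality \<open>s \<le> s\<^sup>p/p + 1/p'\<close> applied to \<open>s = |g|/\<lambda>\<close>, with \<open>\<lambda> = \<parallel>g\<parallel>\<^sub>p\<close>.\<close>
lemma integral_norm_le_Lp_unit_cube:
  fixes g :: "real^'n \<Rightarrow> complex"
  assumes cg: "continuous_on unit_cube g" and p: "p > 1"
  shows "integral unit_cube (\<lambda>x. norm (g x)) \<le> (integral unit_cube (\<lambda>x. norm (g x) powr p)) powr (1/p)"
proof -
  define q where "q = p / (p - 1)"
  have q1: "q > 1" and pq: "1/p + 1/q = 1" using p by (auto simp: q_def field_simps)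
  define M where "M = integral unit_cube (\<lambda>x. norm (g x) powr p)"
  define J where "J = integral unit_cube (\<lambda>x. norm (g x))"
  have ip: "(\<lambda>x. norm (g x) powr p) integrable_on unit_cube"
    using integrable_norm_powr_unit_cube[OF cg] p by simp
  have i1: "(\<lambda>x. norm (g x)) integrable_on unit_cube"
    by (intro integrable_continuous_unit_cube continuous_intros cg)
  have M0: "M \<ge> 0" unfolding M_def by (rule integral_nonneg[OF ip]) auto
  have young: "J / l \<le> M / (p * l powr p) + 1/q" if l: "l > 0" for l
  proof -
    have "J / l = integral unit_cube (\<lambda>x. norm (g x) / l)"
      unfolding J_def by simp
    also have "\<dots> \<le> integral unit_cube (\<lambda>x. norm (g x) powr p / (p * l powr p) + 1/q)"
    proof (rule integral_le)
      show "(\<lambda>x. norm (g x) powr p / (p * l powr p) + 1/q) integrable_on unit_cube"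
        using integrable_on_divide[OF ip] integrable_continuous_unit_cube[OF continuous_on_const]
        by (rule integrable_add)
      fix x
      have "(norm (g x) / l) * 1 \<le> (norm (g x) / l) powr p / p + 1 powr q / q"
        by (rule Youngs_inequality) (use p q1 pq l in auto)
      then show "norm (g x) / l \<le> norm (g x) powr p / (p * l powr p) + 1/q"
        using l by (simp add: powr_divide mult.commute)
    qed (use i1 in \<open>rule integrable_on_divide\<close>)
    also have "\<dots> = M / (p * l powr p) + 1/q"
    proof -
      have "integral unit_cube (\<lambda>x. norm (g x) powr p / (p * l powr p) + 1/q)
          = integral unit_cube (\<lambda>x. norm (g x) powr p / (p * l powr p)) + integral unit_cube (\<lambda>x::real^'n. 1/q)"
        by (rule integral_add[OF integrable_on_divide[OF ip] integrable_continuous_unit_cube[OF continuous_on_const]])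
      then show ?thesis by (simp add: M_def integral_divide)
    qed
    finally show ?thesis .
  qed
  show ?thesis
  proof (cases "M = 0")
    case True
    have "J \<le> 0"
    proof (rule field_le_epsilon)
      fix \<epsilon> :: real assume "\<epsilon> > 0"
      with young[of "\<epsilon> * q"] True q1 show "J \<le> 0 + \<epsilon>" by (simp add: field_simps)
    qed
    then show ?thesis using True by (simp add: J_def M_def)
  next
    case False
    then have Mp: "M > 0" using M0 by simp
    define l where "l = M powr (1/p)"
    have l: "l > 0" using Mp by (simp add: l_def)
    have "l powr p = M" using Mp p by (simp add: l_def powr_powr)
    then have "J / l \<le> 1" using young[OF l] Mp p pq by simp
    then show ?thesis using l by (simp add: J_def M_def l_def field_simps)
  qed
qed

section \<open>Lattice points and dyadic shells\<close>

lemma zabs_nonneg: "zabs \<xi> \<ge> 0"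
  by (simp add: zabs_def sum_nonneg)

lemma abs_component_le_zabs: "\<bar>real_of_int (\<xi> $ i)\<bar> \<le> zabs \<xi>"
proof -
  have "(real_of_int (\<xi> $ i))\<^sup>2 \<le> (\<Sum>j\<in>UNIV. (real_of_int (\<xi> $ j))\<^sup>2)"
    by (rule member_le_sum) auto
  then show ?thesis
    unfolding zabs_def by (metis real_sqrt_abs real_sqrt_le_mono)
qed

lemma zabs_le_jbr: "zabs \<xi> \<le> jbr \<xi>"
  unfolding jbr_def by (metis zabs_nonneg add.commute le_add_same_cancel1 real_sqrt_le_mono real_sqrt_unique zero_le_one zero_le_power2)

lemma jbr_ge_1: "1 \<le> jbr \<xi>"
  unfolding jbr_def by simp

lemma jbr_pos: "0 < jbr \<xi>"
  using jbr_ge_1[of \<xi>] by simp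

lemma card_int_vec_box:
  assumes "finite S"
  shows "finite {\<xi>::int^'n. \<forall>i. \<xi> $ i \<in> S}" and "card {\<xi>::int^'n. \<forall>i. \<xi> $ i \<in> S} = card S ^ CARD('n)"
proof -
  have box: "{\<xi>::int^'n. \<forall>i. \<xi> $ i \<in> S} = vec_lambda ` (PiE UNIV (\<lambda>_. S))"
  proof (intro set_eqI iffI)
    fix \<xi> :: "int^'n" assume "\<xi> \<in> {\<xi>. \<forall>i. \<xi> $ i \<in> S}"
    then have "vec_nth \<xi> \<in> PiE UNIV (\<lambda>_. S)" by auto
    then show "\<xi> \<in> vec_lambda ` (PiE UNIV (\<lambda>_. S))" by (intro image_eqI[where x="vec_nth \<xi>"]) simp_all
  qed auto
  have "inj_on (vec_lambda :: ('n \<Rightarrow> int) \<Rightarrow> int^'n) (PiE UNIV (\<lambda>_. S))"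
    by (rule inj_onI) (simp add: vec_lambda_inject)
  then show "finite {\<xi>::int^'n. \<forall>i. \<xi> $ i \<in> S}" and "card {\<xi>::int^'n. \<forall>i. \<xi> $ i \<in> S} = card S ^ CARD('n)"
    unfolding box using assms by (auto simp: card_image card_PiE intro!: finite_PiE)
qed

lemma zabs_less_subset_box:
  "{\<xi>::int^'n. zabs \<xi> < R} \<subseteq> {\<xi>. \<forall>i. \<xi> $ i \<in> {-\<lceil>R\<rceil>..\<lceil>R\<rceil>}}"
proof safe
  fix \<xi> :: "int^'n" and i assume "zabs \<xi> < R"
  then have "real_of_int \<bar>\<xi> $ i\<bar> \<le> R" using abs_component_le_zabs[of \<xi> i] by simp
  then have "\<bar>\<xi> $ i\<bar> \<le> \<lceil>R\<rceil>" by (simp add: le_ceiling_iff)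
  then show "\<xi> $ i \<in> {-\<lceil>R\<rceil>..\<lceil>R\<rceil>}" by (simp add: abs_le_iff)
qed

lemma finite_zabs_less: "finite {\<xi>::int^'n. zabs \<xi> < R}"
  by (rule finite_subset[OF zabs_less_subset_box card_int_vec_box(1)]) simp

lemma finite_shell [simp]: "finite (shell k :: (int^'n) set)"
  by (rule finite_subset[OF _ finite_zabs_less]) (auto simp: shell_def)

lemma card_shell_le: "real (card (shell k :: (int^'n) set)) \<le> 8 ^ CARD('n) * 2 ^ (k * CARD('n))"
proof -
  define R :: int where "R = 2 ^ (k + 1)"
  have R: "\<lceil>(2::real) ^ (k + 1)\<rceil> = R"
    unfolding R_def by (metis ceiling_of_int of_int_numeral of_int_power)
  have "shell k \<subseteq> {\<xi>::int^'n. zabs \<xi> < 2 ^ (k + 1)}"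
    by (auto simp: shell_def)
  also have "\<dots> \<subseteq> {\<xi>. \<forall>i. \<xi> $ i \<in> {-R..R}}"
    using zabs_less_subset_box[of "2 ^ (k + 1)"] unfolding R .
  finally have "card (shell k :: (int^'n) set) \<le> card {\<xi>::int^'n. \<forall>i. \<xi> $ i \<in> {-R..R}}"
    by (intro card_mono card_int_vec_box(1)) simp
  also have "\<dots> = nat (2 * R + 1) ^ CARD('n)"
    by (subst card_int_vec_box(2)) auto
  finally have "real (card (shell k :: (int^'n) set)) \<le> (2 * 2 ^ (k + 1) + 1) ^ CARD('n)"
    unfolding R_def by (metis (mono_tags, lifting) of_nat_le_iff of_nat_power nat_int_add
        add.commute int_ops(3) of_nat_1 of_nat_add of_nat_mult of_nat_numeral)
  also have "\<dots> \<le> (8 * 2 ^ k) ^ CARD('n)"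
  proof (rule power_mono)
    have "(1::real) \<le> 2 ^ k" by simp
    then show "2 * 2 ^ (k + 1) + 1 \<le> 8 * (2::real) ^ k" by (simp; linarith)
  qed simp
  finally show ?thesis
    by (simp add: power_mult_distrib power_mult)
qed

definition shell_index :: "int^'n \<Rightarrow> nat" where
  "shell_index \<xi> = (LEAST k. zabs \<xi> < 2 ^ (k + 1))"

lemma ex_pow2_gt_zabs: "\<exists>k::nat. zabs \<xi> < 2 ^ (k + 1)"
proof -
  obtain k :: nat where "zabs \<xi> < real k" using reals_Archimedean2 by blast
  also have "real k < 2 ^ (k + 1)"
    by (metis less_exp of_nat_less_iff of_nat_numeral of_nat_power less_le_trans power_increasing
        one_le_numeral le_add1 le_less)
  finally show ?thesis by blast
qed

lemma shell_index_mem: "\<xi> \<in> shell (shell_index \<xi>)"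
proof -
  have lt: "zabs \<xi> < 2 ^ (shell_index \<xi> + 1)"
    unfolding shell_index_def by (rule LeastI_ex[OF ex_pow2_gt_zabs])
  have "2 ^ (j + 1) \<le> zabs \<xi>" if "shell_index \<xi> = j + 1" for j
    using Least_le[of "\<lambda>k. zabs \<xi> < 2 ^ (k + 1)" j] that
    by (fastforce simp: shell_index_def)
  with lt show ?thesis
    by (cases "shell_index \<xi>") (auto simp: shell_def)
qed

lemma shell_disjoint:
  assumes "\<xi> \<in> shell j" and "\<xi> \<in> shell k"
  shows "j = k"
proof -
  have False if "\<xi> \<in> shell a" "\<xi> \<in> shell b" "a < b" for a b
  proof -
    have "(2::real) ^ (a + 1) \<le> 2 ^ b" using \<open>a < b\<close> by (intro power_increasing) auto
    with that show False by (simp add: shell_def)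
  qed
  with assms show ?thesis by (metis linorder_neqE_nat)
qed

lemma mem_shell_iff: "\<xi> \<in> shell k \<longleftrightarrow> k = shell_index \<xi>"
  using shell_index_mem shell_disjoint by blast

lemma jbr_ge_shell: "\<xi> \<in> shell k \<Longrightarrow> 2 ^ k \<le> jbr \<xi>"
  using zabs_le_jbr[of \<xi>] jbr_ge_1[of \<xi>] by (cases "k = 0") (auto simp: shell_def)

lemma jbr_powr_le_shell:
  assumes "s \<le> 0" and "\<xi> \<in> shell k"
  shows "jbr \<xi> powr s \<le> 2 powr (real k * s)"
proof -
  have "jbr \<xi> powr s \<le> (2 ^ k) powr s"
    by (rule powr_mono2'[OF assms(1)]) (use jbr_ge_shell[OF assms(2)] in auto)
  then show ?thesis
    by (simp add: powr_realpow[symmetric] powr_powr)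
qed

lemma card_shell_mult_pow2_le:
  assumes "s \<le> - real CARD('n)"
  shows "real (card (shell k :: (int^'n) set)) * 2 powr (real k * s)
           \<le> 8 ^ CARD('n) * 2 powr (real k * (real CARD('n) + s))"
proof -
  have "real (card (shell k :: (int^'n) set)) * 2 powr (real k * s)
      \<le> 8 ^ CARD('n) * 2 ^ (k * CARD('n)) * 2 powr (real k * s)"
    by (intro mult_right_mono card_shell_le) simp
  also have "(2::real) ^ (k * CARD('n)) = 2 powr (real k * real CARD('n))"
    by (simp add: powr_realpow[symmetric])
  finally show ?thesis
    by (simp add: mult.assoc powr_add[symmetric] distrib_left)
qed

definition shells_upto :: "nat \<Rightarrow> (int^'n) set" where
  "shells_upto K = {\<xi>. shell_index \<xi> \<le> K}"

lemma shells_upto_eq_Union: "shells_upto K = (\<Union>k\<le>K. shell k)"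
  by (auto simp: shells_upto_def mem_shell_iff)

lemma finite_shells_upto [simp]: "finite (shells_upto K)"
  by (simp add: shells_upto_eq_Union)

lemma sum_shells_upto: "sum h (shells_upto K) = (\<Sum>k\<le>K. sum h (shell k))"
  unfolding shells_upto_eq_Union
  by (rule sum.UNION_disjoint) (auto dest: shell_disjoint)

lemma finite_subset_shells_upto:
  assumes "finite X"
  shows "\<exists>K0. \<forall>K\<ge>K0. X \<subseteq> shells_upto K"
  using assms by (intro exI[of _ "Max (insert 0 (shell_index ` X))"]) (auto simp: shells_upto_def intro: order_trans[OF Max_ge])

lemma filterlim_shells_upto:
  "filterlim shells_upto (finite_subsets_at_top UNIV) sequentially"
  unfolding filterlim_def le_filter_def eventually_filtermap
proof safe
  fix P assume "eventually P (finite_subsets_at_top (UNIV :: (int^'n) set))"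
  then obtain X where "finite X" and X: "\<And>Y. finite Y \<Longrightarrow> X \<subseteq> Y \<Longrightarrow> P Y"
    unfolding eventually_finite_subsets_at_top by auto
  moreover obtain K0 where "\<forall>K\<ge>K0. X \<subseteq> shells_upto K"
    using finite_subset_shells_upto[OF \<open>finite X\<close>] by blast
  ultimately show "eventually (\<lambda>K. P (shells_upto K)) sequentially"
    unfolding eventually_sequentially by (intro exI[of _ K0] allI impI X) auto
qed

lemma has_sum_shells_upto_tendsto:
  assumes "(f has_sum S) UNIV"
  shows "(\<lambda>K. \<Sum>\<xi>\<in>shells_upto K. f \<xi>) \<longlonglongrightarrow> S"
  using filterlim_compose[OF assms[unfolded has_sum_def] filterlim_shells_upto] by (simp add: o_def)

lemma eventually_subset_image_lessThan:
  assumes "surj f" and "finite X"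
  shows "eventually (\<lambda>K. X \<subseteq> f ` {..<K}) sequentially"
proof -
  obtain K0 where K0: "inv f ` X \<subseteq> {..<K0}"
    using finite_nat_bounded[OF finite_imageI[OF assms(2)]] by blast
  have "X \<subseteq> f ` {..<K0}"
  proof
    fix x assume "x \<in> X"
    with K0 have "inv f x \<in> {..<K0}" by blast
    then show "x \<in> f ` {..<K0}" using surj_f_inv_f[OF assms(1), of x] by (metis image_eqI)
  qed
  then show ?thesis
    unfolding eventually_sequentially by (meson image_mono lessThan_subset_iff order_trans)
qed

lemma infinite_UNIV_int_vec: "infinite (UNIV :: (int^'n) set)"
proof
  assume "finite (UNIV :: (int^'n) set)"
  then have "finite (range (\<lambda>z::int. vec z :: int^'n))" by (rule finite_subset[rotated]) auto
  moreover have "inj (\<lambda>z::int. vec z :: int^'n)"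
    by (rule injI) (metis vec_component)
  ultimately show False by (simp add: finite_image_iff)
qed

definition lattice_enum :: "nat \<Rightarrow> int^'n" where
  "lattice_enum = from_nat_into UNIV"

lemma bij_lattice_enum: "bij (lattice_enum :: nat \<Rightarrow> int^'n)"
  unfolding lattice_enum_def by (rule bij_betw_from_nat_into) (auto simp: infinite_UNIV_int_vec)

section \<open>Dyadic blocks\<close>

lemma block_eq: "block f k x = (\<Sum>\<xi>\<in>shell k. torus_char x \<xi> * f \<xi>)"
  by (simp add: block_def torus_char_def)

lemma continuous_on_block [continuous_intros]: "continuous_on S (block f k)"
  unfolding block_eq by (intro continuous_intros)

lemma block_add: "block (\<lambda>\<xi>. f \<xi> + g \<xi>) k x = block f k x + block g k x"
  by (simp add: block_def distrib_left sum.distrib)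

lemma block_cmult: "block (\<lambda>\<xi>. c * f \<xi>) k x = c * block f k x"
  by (simp add: block_def sum_distrib_left mult_ac)

lemma block_cong: "(\<And>\<xi>. \<xi> \<in> shell k \<Longrightarrow> f \<xi> = g \<xi>) \<Longrightarrow> block f k = block g k"
  by (auto simp: block_def fun_eq_iff intro!: sum.cong)

lemma has_integral_block_mult_cnj_char:
  assumes "\<xi> \<in> shell k"
  shows "((\<lambda>x. block f k x * cnj (torus_char x \<xi>)) has_integral f \<xi>) unit_cube"
proof -
  have "block f k x * cnj (torus_char x \<xi>) = (\<Sum>\<eta>\<in>shell k. f \<eta> * torus_char x (\<eta> - \<xi>))" for x
    unfolding torus_char_mult_cnj[symmetric] block_eq sum_distrib_right by (simp add: mult_ac)
  moreover have "((\<lambda>x. \<Sum>\<eta>\<in>shell k. f \<eta> * torus_char x (\<eta> - \<xi>)) has_integral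
      (\<Sum>\<eta>\<in>shell k. f \<eta> * (if \<eta> - \<xi> = 0 then 1 else 0))) unit_cube"
    by (intro has_integral_sum finite_shell has_integral_mult_right has_integral_torus_char)
  moreover have "(\<Sum>\<eta>\<in>shell k. f \<eta> * (if \<eta> - \<xi> = 0 then 1 else 0)) = f \<xi>"
    using assms by (simp add: if_distrib[of "\<lambda>t. f _ * t"] sum.delta cong: if_cong)
  ultimately show ?thesis by simp
qed

abbreviation block_norm :: "real \<Rightarrow> (int^'n \<Rightarrow> complex) \<Rightarrow> nat \<Rightarrow> real" where
  "block_norm p f k \<equiv> Lp_norm_torus p (block f k)"

lemma Lp_norm_torus_nonneg: "Lp_norm_torus p g \<ge> 0"
  by (simp add: Lp_norm_torus_def)

lemma Lp_norm_torus_le_bound: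
  fixes g :: "real^'n \<Rightarrow> complex"
  assumes "continuous_on unit_cube g" "p > 0" "M \<ge> 0" "\<And>x. x \<in> unit_cube \<Longrightarrow> norm (g x) \<le> M"
  shows "Lp_norm_torus p g \<le> M"
proof -
  have "integral unit_cube (\<lambda>x. norm (g x) powr p) \<le> integral (unit_cube :: (real^'n) set) (\<lambda>x. M powr p)"
    using assms by (intro integral_le integrable_norm_powr_unit_cube integrable_continuous_unit_cube
        continuous_on_const powr_mono2) auto
  then have "Lp_norm_torus p g \<le> (M powr p) powr (1/p)"
    unfolding Lp_norm_torus_def using assms(2)
    by (intro powr_mono2) (auto intro!: integral_nonneg integrable_norm_powr_unit_cube assms(1))
  then show ?thesis using assms(2,3) by (simp add: powr_powr)
qed

lemma norm_le_block_norm: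
  assumes "\<xi> \<in> shell k" "p > 1"
  shows "norm (f \<xi>) \<le> block_norm p f k"
proof -
  note I = has_integral_block_mult_cnj_char[OF assms(1), of f]
  have "norm (f \<xi>) \<le> integral unit_cube (\<lambda>x. norm (block f k x))"
    unfolding integral_unique[OF I, symmetric]
    by (rule integral_norm_bound_integral[OF has_integral_integrable[OF I]])
       (auto intro: integrable_continuous_unit_cube continuous_intros simp: norm_mult)
  also have "\<dots> \<le> block_norm p f k"
    unfolding Lp_norm_torus_def
    by (rule integral_norm_le_Lp_unit_cube[OF continuous_on_block assms(2)])
  finally show ?thesis .
qed

lemma block_norm_le_sum_norm:
  "p > 0 \<Longrightarrow> block_norm p f k \<le> (\<Sum>\<xi>\<in>shell k. norm (f \<xi>))"
  by (rule Lp_norm_torus_le_bound)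
     (auto simp: block_eq norm_mult intro!: continuous_intros sum_nonneg order.trans[OF norm_sum] sum_mono)

lemma block_norm_eq_0:
  assumes "\<And>\<xi>. \<xi> \<in> shell k \<Longrightarrow> f \<xi> = 0" "p > 0"
  shows "block_norm p f k = 0"
proof -
  have "block f k = (\<lambda>x. 0)" using assms by (auto simp: block_def fun_eq_iff)
  then show ?thesis using assms(2) by (simp add: Lp_norm_torus_def)
qed

lemma block_norm_cmult:
  assumes "p > 0"
  shows "block_norm p (\<lambda>\<xi>. c * f \<xi>) k = norm c * block_norm p f k"
proof -
  have "integral unit_cube (\<lambda>x. norm (block (\<lambda>\<xi>. c * f \<xi>) k x) powr p)
      = norm c powr p * integral unit_cube (\<lambda>x. norm (block f k x) powr p)"
    by (simp add: block_cmult norm_mult powr_mult)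
  then show ?thesis
    using assms by (simp add: Lp_norm_torus_def powr_mult powr_powr integral_nonneg
        integrable_norm_powr_unit_cube continuous_on_block)
qed

lemma powr_add_le:
  fixes A B s :: real
  assumes "A \<ge> 0" "B \<ge> 0" "s > 0"
  shows "(A + B) powr s \<le> 2 powr s * (A powr s + B powr s)"
proof -
  have "(A + B) powr s \<le> (2 * max A B) powr s"
    using assms by (intro powr_mono2) auto
  also have "\<dots> = 2 powr s * max A B powr s"
    using assms by (simp add: powr_mult)
  also have "max A B powr s \<le> A powr s + B powr s"
    using assms by (cases "A \<le> B") (auto simp: max_def)
  finally show ?thesis by simp
qed

text \<open>A quasi-triangle inequality suffices, since \<open>p < 1\<close> is allowed.\<close>
lemma block_norm_add_le:
  assumes p: "p > 0"
  shows "block_norm p (\<lambda>\<xi>. f \<xi> + g \<xi>) k \<le> 2 * 2 powr (1/p) * (block_norm p f k + block_norm p g k)"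
proof -
  define A where "A = integral unit_cube (\<lambda>x. norm (block f k x) powr p)"
  define B where "B = integral unit_cube (\<lambda>x. norm (block g k x) powr p)"
  have int: "(\<lambda>x. norm (block h k x) powr p) integrable_on unit_cube" for h :: "int^'n \<Rightarrow> complex"
    using p by (intro integrable_norm_powr_unit_cube continuous_on_block)
  have A0: "A \<ge> 0" and B0: "B \<ge> 0"
    unfolding A_def B_def by (auto intro: integral_nonneg int)
  have pointwise: "norm (block (\<lambda>\<xi>. f \<xi> + g \<xi>) k x) powr p
      \<le> 2 powr p * (norm (block f k x) powr p + norm (block g k x) powr p)" for x
  proof -
    have "norm (block (\<lambda>\<xi>. f \<xi> + g \<xi>) k x) powr p \<le> (norm (block f k x) + norm (block g k x)) powr p"
      using p by (auto simp: block_add intro!: powr_mono2 norm_triangle_ineq)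
    also have "\<dots> \<le> 2 powr p * (norm (block f k x) powr p + norm (block g k x) powr p)"
      using p by (intro powr_add_le) auto
    finally show ?thesis .
  qed
  have "integral unit_cube (\<lambda>x. norm (block (\<lambda>\<xi>. f \<xi> + g \<xi>) k x) powr p) \<le> 2 powr p * (A + B)"
    unfolding A_def B_def
    using integral_le[OF int integrable_on_mult_right[OF integrable_add[OF int int]] pointwise]
    by (simp add: integral_add int)
  then have "block_norm p (\<lambda>\<xi>. f \<xi> + g \<xi>) k \<le> (2 powr p * (A + B)) powr (1/p)"
    unfolding Lp_norm_torus_def using p
    by (intro powr_mono2) (auto intro: integral_nonneg int)
  also have "\<dots> = 2 * (A + B) powr (1/p)"
    using p A0 B0 by (simp add: powr_mult powr_powr)
  also have "(A + B) powr (1/p) \<le> 2 powr (1/p) * (A powr (1/p) + B powr (1/p))"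
    using p A0 B0 by (intro powr_add_le) auto
  finally show ?thesis
    by (simp add: A_def B_def Lp_norm_torus_def mult_ac)
qed

section \<open>Bounded functionals on spaces of coefficient functions\<close>

locale fun_space =
  fixes E :: "('a \<Rightarrow> complex) set" and N :: "('a \<Rightarrow> complex) \<Rightarrow> real"
  assumes zero_mem: "(\<lambda>_. 0) \<in> E"
    and add_mem: "u \<in> E \<Longrightarrow> v \<in> E \<Longrightarrow> (\<lambda>t. u t + v t) \<in> E"
    and scale_mem: "u \<in> E \<Longrightarrow> (\<lambda>t. c * u t) \<in> E"
    and N_nonneg: "N u \<ge> 0"
    and N_scale: "u \<in> E \<Longrightarrow> N (\<lambda>t. c * u t) = norm c * N u"
begin

lemma N_zero: "N (\<lambda>_. 0) = 0"
  using N_scale[OF zero_mem, of 0] by simp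

lemma sum_mem: "finite F \<Longrightarrow> (\<And>i. i \<in> F \<Longrightarrow> g i \<in> E) \<Longrightarrow> (\<lambda>t. \<Sum>i\<in>F. c i * g i t) \<in> E"
  by (induction F rule: finite_induct) (auto intro!: add_mem scale_mem zero_mem)

lemma diff_mem: "u \<in> E \<Longrightarrow> v \<in> E \<Longrightarrow> (\<lambda>t. u t - v t) \<in> E"
  using add_mem[OF _ scale_mem[of v "-1"]] by simp

lemma dual_add: "e \<in> dual_space E N \<Longrightarrow> u \<in> E \<Longrightarrow> v \<in> E \<Longrightarrow> e (\<lambda>t. u t + v t) = e u + e v"
  by (simp add: dual_space_def)

lemma dual_scale: "e \<in> dual_space E N \<Longrightarrow> u \<in> E \<Longrightarrow> e (\<lambda>t. c * u t) = c * e u"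
  by (simp add: dual_space_def)

lemma dual_sum:
  assumes "e \<in> dual_space E N" "finite F" "\<And>i. i \<in> F \<Longrightarrow> g i \<in> E"
  shows "e (\<lambda>t. \<Sum>i\<in>F. c i * g i t) = (\<Sum>i\<in>F. c i * e (g i))"
  using assms(2,3)
proof (induction F rule: finite_induct)
  case empty
  show ?case using dual_scale[OF assms(1) zero_mem, of 0] by simp
next
  case (insert i F)
  then show ?case
    by (simp add: dual_add[OF assms(1) scale_mem sum_mem] dual_scale[OF assms(1)])
qed

lemma dual_bdd_above:
  assumes "e \<in> dual_space E N"
  shows "bdd_above {norm (e u) | u. u \<in> E \<and> N u \<le> 1}"
proof -
  obtain B where B: "\<And>u. u \<in> E \<Longrightarrow> norm (e u) \<le> B * N u"
    using assms unfolding dual_space_def by blast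
  have "norm (e u) \<le> max B 0" if "u \<in> E" "N u \<le> 1" for u
  proof -
    have "norm (e u) \<le> max B 0 * N u"
      using B[OF that(1)] N_nonneg[of u] by (meson max.cobounded1 mult_right_mono order_trans)
    also have "\<dots> \<le> max B 0" using that N_nonneg[of u] by (intro mult_left_le) auto
    finally show ?thesis .
  qed
  then show ?thesis by (auto intro!: bdd_aboveI)
qed

lemma dual_norm_nonneg:
  assumes "e \<in> dual_space E N"
  shows "dual_norm E N e \<ge> 0"
proof -
  have "norm (e (\<lambda>_. 0)) \<in> {norm (e u) | u. u \<in> E \<and> N u \<le> 1}"
    using zero_mem N_zero by auto
  then have "norm (e (\<lambda>_. 0)) \<le> dual_norm E N e"
    unfolding dual_norm_def by (rule cSup_upper[OF _ dual_bdd_above[OF assms]])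
  then show ?thesis by (meson norm_ge_zero order_trans)
qed

lemma dual_norm_bound:
  assumes e: "e \<in> dual_space E N" and u: "u \<in> E"
  shows "norm (e u) \<le> dual_norm E N e * N u"
proof (cases "N u = 0")
  case True
  obtain B where "norm (e u) \<le> B * N u"
    using e u unfolding dual_space_def by blast
  with True show ?thesis by simp
next
  case False
  then have Nu: "N u > 0" using N_nonneg[of u] by simp
  define v where "v = (\<lambda>t. complex_of_real (1 / N u) * u t)"
  have "v \<in> E" unfolding v_def by (rule scale_mem[OF u])
  moreover have "N v = 1"
    unfolding v_def N_scale[OF u] using Nu by (simp add: norm_divide)
  ultimately have "norm (e v) \<in> {norm (e u) | u. u \<in> E \<and> N u \<le> 1}"
    by (intro CollectI exI[of _ v]) simp
  then have "norm (e v) \<le> dual_norm E N e"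
    unfolding dual_norm_def by (rule cSup_upper[OF _ dual_bdd_above[OF e]])
  moreover have "e v = complex_of_real (1 / N u) * e u"
    unfolding v_def by (rule dual_scale[OF e u])
  ultimately have "norm (e u) / N u \<le> dual_norm E N e"
    using Nu by (simp add: norm_mult norm_divide)
  then show ?thesis using Nu by (simp add: field_simps)
qed

lemma dual_norm_le:
  assumes "B \<ge> 0" and "\<And>u. u \<in> E \<Longrightarrow> norm (e u) \<le> B * N u"
  shows "dual_norm E N e \<le> B"
  unfolding dual_norm_def
proof (rule cSup_least)
  show "{norm (e u) | u. u \<in> E \<and> N u \<le> 1} \<noteq> {}"
    using zero_mem N_zero by auto
next
  fix x assume "x \<in> {norm (e u) | u. u \<in> E \<and> N u \<le> 1}"
  then obtain u where "u \<in> E" "N u \<le> 1" "x = norm (e u)" by blast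
  with assms show "x \<le> B" by (metis mult_left_le order_trans N_nonneg)
qed

lemma evaluation_dual:
  assumes "B \<ge> 0" and "\<And>u. u \<in> E \<Longrightarrow> norm (u \<xi>) \<le> B * N u"
  shows "(\<lambda>u. c * u \<xi>) \<in> dual_space E N" and "dual_norm E N (\<lambda>u. c * u \<xi>) \<le> norm c * B"
proof -
  have bound: "norm (c * u \<xi>) \<le> (norm c * B) * N u" if "u \<in> E" for u
    using mult_left_mono[OF assms(2)[OF that], of "norm c"] by (simp add: norm_mult mult_ac)
  then have "\<exists>B'. \<forall>u\<in>E. norm (c * u \<xi>) \<le> B' * N u" by blast
  then show "(\<lambda>u. c * u \<xi>) \<in> dual_space E N"
    unfolding dual_space_def by (simp add: distrib_left mult.left_commute)
  show "dual_norm E N (\<lambda>u. c * u \<xi>) \<le> norm c * B"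
    using assms(1) by (intro dual_norm_le bound) auto
qed

end

section \<open>Symbols of order \<open>m < -n\<close>\<close>

lemma sum_shell_jbr_powr_le:
  assumes "s \<le> - real CARD('n)"
  shows "(\<Sum>\<xi>\<in>(shell k :: (int^'n) set). jbr \<xi> powr s) \<le> 8 ^ CARD('n) * (2 powr (real CARD('n) + s)) ^ k"
proof -
  have "(\<Sum>\<xi>\<in>(shell k :: (int^'n) set). jbr \<xi> powr s) \<le> real (card (shell k :: (int^'n) set)) * 2 powr (real k * s)"
    using assms by (intro sum_bounded_above jbr_powr_le_shell) auto
  also have "\<dots> \<le> 8 ^ CARD('n) * 2 powr (real k * (real CARD('n) + s))"
    by (rule card_shell_mult_pow2_le[OF assms])
  also have "2 powr (real k * (real CARD('n) + s)) = (2 powr (real CARD('n) + s)) ^ k"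
    by (simp add: powr_realpow[symmetric] powr_powr mult.commute)
  finally show ?thesis .
qed

lemma summable_on_jbr_powr:
  assumes s: "s < - real CARD('n)"
  shows "(\<lambda>\<xi>::int^'n. jbr \<xi> powr s) summable_on UNIV"
proof (rule nonneg_bdd_above_summable_on)
  define r where "r = (2::real) powr (real CARD('n) + s)"
  have r0: "r > 0" by (simp add: r_def)
  have "r < 2 powr 0" unfolding r_def by (rule powr_less_mono) (use s in auto)
  then have r1: "r < 1" by simp
  have upto: "(\<Sum>\<xi>\<in>(shells_upto K :: (int^'n) set). jbr \<xi> powr s) \<le> 8 ^ CARD('n) * (1 / (1 - r))" for K
  proof -
    have "(\<Sum>\<xi>\<in>(shells_upto K :: (int^'n) set). jbr \<xi> powr s) \<le> (\<Sum>k\<le>K. 8 ^ CARD('n) * r ^ k)"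
      unfolding sum_shells_upto r_def using s by (intro sum_mono sum_shell_jbr_powr_le) auto
    also have "\<dots> = 8 ^ CARD('n) * (\<Sum>k\<le>K. r ^ k)"
      by (simp add: sum_distrib_left)
    also have "(\<Sum>k\<le>K. r ^ k) \<le> (\<Sum>k. r ^ k)"
      by (rule sum_le_suminf) (use r0 r1 in \<open>auto intro: summable_geometric\<close>)
    also have "(\<Sum>k. r ^ k) = 1 / (1 - r)"
      using r0 r1 by (simp add: suminf_geometric)
    finally show ?thesis by simp
  qed
  show "bdd_above (sum (\<lambda>\<xi>::int^'n. jbr \<xi> powr s) ` {F. F \<subseteq> UNIV \<and> finite F})"
  proof (rule bdd_aboveI2)
    fix F :: "(int^'n) set" assume "F \<in> {F. F \<subseteq> UNIV \<and> finite F}"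
    then obtain K where "\<forall>K'\<ge>K. F \<subseteq> shells_upto K'"
      using finite_subset_shells_upto[of F] by auto
    then have sub: "F \<subseteq> shells_upto K" by simp
    have "sum (\<lambda>\<xi>. jbr \<xi> powr s) F \<le> sum (\<lambda>\<xi>. jbr \<xi> powr s) (shells_upto K :: (int^'n) set)"
      using sum_mono2[OF finite_shells_upto sub, of "\<lambda>\<xi>. jbr \<xi> powr s"] by simp
    from this upto show "sum (\<lambda>\<xi>. jbr \<xi> powr s) F \<le> 8 ^ CARD('n) * (1 / (1 - r))"
      by (rule order_trans)
  qed
qed simp

lemma summable_on_if_norm_le_jbr_powr:
  fixes a :: "int^'n \<Rightarrow> complex"
  assumes "\<forall>\<xi>. norm (a \<xi>) \<le> C * jbr \<xi> powr m" and "m < - real CARD('n)"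
  shows "a summable_on UNIV"
proof -
  have "(\<lambda>\<xi>::int^'n. C * jbr \<xi> powr m) summable_on UNIV"
    by (intro summable_on_cmult_right summable_on_jbr_powr assms(2))
  then have "(\<lambda>\<xi>. norm (a \<xi>)) summable_on UNIV"
    by (rule Infinite_Sum.abs_summable_on_comparison_test') (use assms(1) in auto)
  then show ?thesis by (rule Infinite_Sum.abs_summable_summable)
qed

text \<open>The crude bound \<open>\<parallel>block\<^sub>k g\<parallel>\<^sub>p \<le> \<Sum>\<^sub>s\<^sub>h\<^sub>e\<^sub>l\<^sub>l\<^sub>k |g|\<close> costs a factor \<open>#shell\<^sub>k \<sim> 2\<^sup>k\<^sup>n\<close>,
  which the decay \<open>2\<^sup>k\<^sup>m\<close> of the symbol absorbs.\<close>
lemma multiplier_block_norm_le: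
  fixes a u g :: "int^'n \<Rightarrow> complex"
  assumes p: "p > 1" and C: "C \<ge> 0" and aC: "\<forall>\<xi>. norm (a \<xi>) \<le> C * jbr \<xi> powr m"
    and m: "m \<le> - real CARD('n)"
    and g: "\<And>\<xi>. norm (g \<xi>) \<le> norm (a \<xi>) * norm (u \<xi>)"
  shows "block_norm p g k \<le> (8 ^ CARD('n) * C) * block_norm p u k"
proof -
  have a_shell: "norm (a \<xi>) \<le> C * 2 powr (real k * m)" if "\<xi> \<in> shell k" for \<xi>
  proof -
    have "jbr \<xi> powr m \<le> 2 powr (real k * m)"
      by (rule jbr_powr_le_shell[OF _ that]) (use m in simp)
    from order_trans[OF aC[rule_format] mult_left_mono[OF this C]] show ?thesis .
  qed
  have "block_norm p g k \<le> (\<Sum>\<xi>\<in>shell k. norm (g \<xi>))"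
    using p by (intro block_norm_le_sum_norm) simp
  also have "\<dots> \<le> (\<Sum>\<xi>\<in>(shell k :: (int^'n) set). (C * 2 powr (real k * m)) * block_norm p u k)"
    using C by (intro sum_mono order_trans[OF g] mult_mono a_shell norm_le_block_norm p) auto
  also have "\<dots> = C * block_norm p u k * (real (card (shell k :: (int^'n) set)) * 2 powr (real k * m))"
    by (simp add: mult_ac)
  also have "\<dots> \<le> C * block_norm p u k * (8 ^ CARD('n) * 2 powr (real k * (real CARD('n) + m)))"
    using C by (intro mult_left_mono card_shell_mult_pow2_le m) (auto simp: Lp_norm_torus_nonneg)
  also have "\<dots> \<le> C * block_norm p u k * (8 ^ CARD('n) * 2 powr 0)"
    using C m by (intro mult_left_mono powr_mono) (auto simp: Lp_norm_torus_nonneg mult_nonneg_nonpos)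
  finally show ?thesis by (simp add: mult_ac)
qed

section \<open>Periodic Besov spaces\<close>

lemma besov_term_nonneg: "besov_term w p q f k \<ge> 0"
  by (simp add: besov_term_def)

lemma besov_norm_nonneg: "besov_norm w p q f \<ge> 0"
  by (simp add: besov_norm_def)

definition freq_trunc :: "nat \<Rightarrow> (int^'n \<Rightarrow> complex) \<Rightarrow> int^'n \<Rightarrow> complex" where
  "freq_trunc K f \<xi> = (if shell_index \<xi> \<le> K then f \<xi> else 0)"

definition freq_tail :: "nat \<Rightarrow> (int^'n \<Rightarrow> complex) \<Rightarrow> int^'n \<Rightarrow> complex" where
  "freq_tail K f \<xi> = (if shell_index \<xi> \<le> K then 0 else f \<xi>)"

definition dirac :: "int^'n \<Rightarrow> int^'n \<Rightarrow> complex" where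
  "dirac \<xi> \<eta> = (if \<eta> = \<xi> then 1 else 0)"

lemma freq_trunc_add_tail: "(\<lambda>t. freq_trunc K f t + freq_tail K f t) = f"
  by (auto simp: freq_trunc_def freq_tail_def)

lemma freq_trunc_eq_sum_dirac: "freq_trunc K f = (\<lambda>t. \<Sum>\<xi>\<in>shells_upto K. f \<xi> * dirac \<xi> t)"
proof
  fix t
  have "(\<Sum>\<xi>\<in>shells_upto K. f \<xi> * dirac \<xi> t) = (if t \<in> shells_upto K then f t else 0)"
    by (simp add: dirac_def if_distrib[of "\<lambda>x. _ * x"] sum.delta' cong: if_cong)
  then show "freq_trunc K f t = (\<Sum>\<xi>\<in>shells_upto K. f \<xi> * dirac \<xi> t)"
    by (simp add: freq_trunc_def shells_upto_def)
qed

lemma fourier_mult_sub_enum_sum: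
  fixes a u :: "int^'n \<Rightarrow> complex"
  shows "fourier_mult a u t - (\<Sum>k<K. a (lattice_enum k) * u (lattice_enum k) * dirac (lattice_enum k) t)
           = (if t \<in> lattice_enum ` {..<K} then 0 else a t * u t)"
proof -
  have "inj_on (lattice_enum :: nat \<Rightarrow> int^'n) {..<K}"
    using bij_lattice_enum bij_is_inj inj_on_subset by blast
  then have "(\<Sum>k<K. a (lattice_enum k) * u (lattice_enum k) * dirac (lattice_enum k) t)
      = (\<Sum>\<xi>\<in>lattice_enum ` {..<K}. a \<xi> * u \<xi> * dirac \<xi> t)"
    by (simp add: sum.reindex)
  also have "\<dots> = (if t \<in> lattice_enum ` {..<K} then a t * u t else 0)"
    by (simp add: dirac_def if_distrib[of "\<lambda>x. _ * x"] sum.delta' cong: if_cong)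
  finally show ?thesis by (simp add: fourier_mult_def)
qed

context
  fixes w p q :: real
  assumes p_pos: "0 < p" and q_pos: "0 < q"
begin

lemma besov_term_cmult: "besov_term w p q (\<lambda>\<xi>. c * f \<xi>) k = norm c powr q * besov_term w p q f k"
  by (simp add: besov_term_def block_norm_cmult[OF p_pos] powr_mult Lp_norm_torus_nonneg mult_ac)

lemma besov_term_cong:
  assumes "\<And>\<xi>. \<xi> \<in> shell k \<Longrightarrow> f \<xi> = g \<xi>"
  shows "besov_term w p q f k = besov_term w p q g k"
proof -
  have "block f k = block g k" by (rule block_cong) (rule assms)
  then show ?thesis by (simp add: besov_term_def)
qed

lemma besov_term_eq_0:
  assumes "\<And>\<xi>. \<xi> \<in> shell k \<Longrightarrow> f \<xi> = 0"
  shows "besov_term w p q f k = 0"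
  using block_norm_eq_0[OF assms p_pos] q_pos by (simp add: besov_term_def)

lemma besov_term_add_le:
  "besov_term w p q (\<lambda>\<xi>. f \<xi> + g \<xi>) k
     \<le> ((2 * 2 powr (1/p)) powr q * 2 powr q) * (besov_term w p q f k + besov_term w p q g k)"
proof -
  define c where "c = 2 * 2 powr (1/p)"
  let ?F = "block_norm p f k" and ?G = "block_norm p g k"
  have "block_norm p (\<lambda>\<xi>. f \<xi> + g \<xi>) k powr q \<le> (c * (?F + ?G)) powr q"
    using block_norm_add_le[OF p_pos, of f g k] q_pos
    by (intro powr_mono2) (auto simp: c_def Lp_norm_torus_nonneg)
  also have "\<dots> = c powr q * (?F + ?G) powr q"
    by (simp add: c_def powr_mult Lp_norm_torus_nonneg)
  also have "(?F + ?G) powr q \<le> 2 powr q * (?F powr q + ?G powr q)"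
    using q_pos by (intro powr_add_le) (auto simp: Lp_norm_torus_nonneg)
  finally have "block_norm p (\<lambda>\<xi>. f \<xi> + g \<xi>) k powr q \<le> c powr q * (2 powr q * (?F powr q + ?G powr q))"
    by (simp add: mult_left_mono)
  from mult_left_mono[OF this, of "2 powr (real k * w * q)"] show ?thesis
    unfolding besov_term_def c_def[symmetric] by (simp add: algebra_simps)
qed

lemma besov_space_if_vanishes_beyond:
  assumes "\<And>\<xi>. K < shell_index \<xi> \<Longrightarrow> f \<xi> = 0"
  shows "f \<in> besov_space w p q"
proof -
  have "besov_term w p q f k = 0" if "k \<notin> {..K}" for k
    using that assms by (intro besov_term_eq_0) (auto simp: mem_shell_iff)
  then show ?thesis unfolding besov_space_def by (auto intro: summable_finite[of "{..K}"])
qed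

lemma besov_comparison:
  assumes u: "u \<in> besov_space w p q" and c: "c \<ge> 0"
    and le: "\<And>k. besov_term w p q g k \<le> c powr q * besov_term w p q u k"
  shows "g \<in> besov_space w p q" and "besov_norm w p q g \<le> c * besov_norm w p q u"
proof -
  have su: "summable (besov_term w p q u)" using u by (simp add: besov_space_def)
  have sg: "summable (besov_term w p q g)"
    by (rule summable_comparison_test[OF _ summable_mult[OF su, of "c powr q"]])
       (auto simp: besov_term_nonneg le)
  then show "g \<in> besov_space w p q" by (simp add: besov_space_def)
  have "suminf (besov_term w p q g) \<le> c powr q * suminf (besov_term w p q u)"
    using suminf_le[OF le sg summable_mult[OF su]] by (simp add: suminf_mult[OF su])
  then have "besov_norm w p q g \<le> (c powr q * suminf (besov_term w p q u)) powr (1/q)"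
    unfolding besov_norm_def using q_pos
    by (intro powr_mono2) (auto intro!: suminf_nonneg sg besov_term_nonneg)
  also have "\<dots> = c * besov_norm w p q u"
    using c q_pos
    by (simp add: besov_norm_def powr_mult powr_powr suminf_nonneg[OF su] besov_term_nonneg)
  finally show "besov_norm w p q g \<le> c * besov_norm w p q u" .
qed

lemma besov_fun_space: "fun_space (besov_space w p q :: (int^'n \<Rightarrow> complex) set) (besov_norm w p q)"
proof
  show "(\<lambda>_. 0) \<in> besov_space w p q"
    by (rule besov_space_if_vanishes_beyond[of 0]) simp
next
  fix u v :: "int^'n \<Rightarrow> complex"
  assume u: "u \<in> besov_space w p q" and v: "v \<in> besov_space w p q"
  show "(\<lambda>t. u t + v t) \<in> besov_space w p q"
    unfolding besov_space_def mem_Collect_eq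
  proof (rule summable_comparison_test)
    show "summable (\<lambda>k. ((2 * 2 powr (1/p)) powr q * 2 powr q) * (besov_term w p q u k + besov_term w p q v k))"
      using u v by (intro summable_mult summable_add) (auto simp: besov_space_def)
  qed (auto simp: besov_term_nonneg besov_term_add_le)
next
  fix u :: "int^'n \<Rightarrow> complex" and c
  assume u: "u \<in> besov_space w p q"
  have le: "besov_term w p q (\<lambda>t. c * u t) k \<le> norm c powr q * besov_term w p q u k" for k
    by (simp add: besov_term_cmult)
  show "(\<lambda>t. c * u t) \<in> besov_space w p q"
    by (rule besov_comparison(1)[OF u _ le]) simp
  have "besov_term w p q (\<lambda>t. c * u t) = (\<lambda>k. norm c powr q * besov_term w p q u k)"
    by (simp add: fun_eq_iff besov_term_cmult)
  moreover have "summable (besov_term w p q u)" using u by (simp add: besov_space_def)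
  moreover have "suminf (besov_term w p q u) \<ge> 0"
    using calculation(2) by (rule suminf_nonneg) (simp add: besov_term_nonneg)
  ultimately show "besov_norm w p q (\<lambda>t. c * u t) = norm c * besov_norm w p q u"
    using q_pos by (simp add: besov_norm_def suminf_mult powr_mult powr_powr)
qed (rule besov_norm_nonneg)

interpretation besov: fun_space "besov_space w p q" "besov_norm w p q"
  by (rule besov_fun_space)

lemma block_norm_le_besov_norm:
  assumes "f \<in> besov_space w p q"
  shows "2 powr (real k * w) * block_norm p f k \<le> besov_norm w p q f"
proof -
  have s: "summable (besov_term w p q f)" using assms by (simp add: besov_space_def)
  have "besov_term w p q f k \<le> suminf (besov_term w p q f)"
    using sum_le_suminf[OF s, of "{k}"] by (simp add: besov_term_nonneg)
  then have "besov_term w p q f k powr (1/q) \<le> besov_norm w p q f"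
    unfolding besov_norm_def using q_pos by (intro powr_mono2) (auto intro: besov_term_nonneg)
  moreover have "besov_term w p q f k powr (1/q) = 2 powr (real k * w) * block_norm p f k"
    using q_pos by (simp add: besov_term_def powr_mult powr_powr Lp_norm_torus_nonneg)
  ultimately show ?thesis by simp
qed

lemma besov_term_freq_trunc:
  "besov_term w p q (freq_trunc K f) k = (if k \<le> K then besov_term w p q f k else 0)"
  by (auto intro!: besov_term_cong besov_term_eq_0 simp: freq_trunc_def mem_shell_iff)

lemma besov_term_freq_tail:
  "besov_term w p q (freq_tail K f) k = (if k \<le> K then 0 else besov_term w p q f k)"
  by (auto intro!: besov_term_cong besov_term_eq_0 simp: freq_tail_def mem_shell_iff)

lemma freq_trunc_mem: "freq_trunc K f \<in> besov_space w p q"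
  by (rule besov_space_if_vanishes_beyond[of K]) (simp add: freq_trunc_def)

lemma dirac_mem: "dirac \<xi> \<in> besov_space w p q"
  by (rule besov_space_if_vanishes_beyond[of "shell_index \<xi>"]) (auto simp: dirac_def)

lemma freq_tail_mem: "f \<in> besov_space w p q \<Longrightarrow> freq_tail K f \<in> besov_space w p q"
  by (rule besov_comparison(1)[of f 1]) (simp_all add: besov_term_freq_tail besov_term_nonneg)

lemma besov_norm_freq_trunc_le:
  "f \<in> besov_space w p q \<Longrightarrow> besov_norm w p q (freq_trunc K f) \<le> besov_norm w p q f"
  using besov_comparison(2)[of f 1 "freq_trunc K f"] by (simp add: besov_term_freq_trunc besov_term_nonneg)

lemma besov_norm_freq_tail_tendsto:
  assumes f: "f \<in> besov_space w p q"
  shows "(\<lambda>K. besov_norm w p q (freq_tail K f)) \<longlonglongrightarrow> 0"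
proof -
  let ?t = "besov_term w p q f"
  have s: "summable ?t" using f by (simp add: besov_space_def)
  have tail_sum: "suminf (besov_term w p q (freq_tail K f)) = suminf ?t - (\<Sum>k<Suc K. ?t k)" for K
  proof -
    have "(\<lambda>k. ?t k - (if k \<in> {..<Suc K} then ?t k else 0)) sums (suminf ?t - (\<Sum>k<Suc K. ?t k))"
      by (intro sums_diff summable_sums s sums_If_finite_set) simp
    moreover have "(\<lambda>k. ?t k - (if k \<in> {..<Suc K} then ?t k else 0)) = besov_term w p q (freq_tail K f)"
      by (simp add: fun_eq_iff besov_term_freq_tail)
    ultimately show ?thesis by (simp add: sums_iff)
  qed
  have "(\<lambda>K. suminf ?t - (\<Sum>k<Suc K. ?t k)) \<longlonglongrightarrow> suminf ?t - suminf ?t"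
    by (intro tendsto_diff tendsto_const LIMSEQ_Suc summable_LIMSEQ s)
  then have "(\<lambda>K. suminf (besov_term w p q (freq_tail K f)) powr (1/q)) \<longlonglongrightarrow> 0"
    using q_pos freq_tail_mem[OF f]
    by (intro tendsto_zero_powrI[where b="1/q"] always_eventually allI suminf_nonneg)
       (auto simp: tail_sum besov_space_def besov_term_nonneg)
  then show ?thesis by (simp add: besov_norm_def)
qed

lemma besov_norm_dirac: "besov_norm w p q (dirac \<xi>) = 2 powr (real (shell_index \<xi>) * w)"
proof -
  let ?k = "shell_index \<xi>"
  have "block (dirac \<xi>) ?k = (\<lambda>x. torus_char x \<xi>)"
    using shell_index_mem[of \<xi>]
    by (auto simp: block_eq dirac_def fun_eq_iff if_distrib[of "\<lambda>t. _ * t"] cong: if_cong)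
  then have "block_norm p (dirac \<xi>) ?k = 1"
    by (simp add: Lp_norm_torus_def)
  moreover have "besov_term w p q (dirac \<xi>) k = 0" if "k \<noteq> ?k" for k
    using that by (intro besov_term_eq_0) (auto simp: dirac_def mem_shell_iff)
  ultimately have "besov_term w p q (dirac \<xi>) = (\<lambda>k. if k = ?k then 2 powr (real ?k * w * q) else 0)"
    by (auto simp: fun_eq_iff besov_term_def)
  then have "suminf (besov_term w p q (dirac \<xi>)) = 2 powr (real ?k * w * q)"
    using sums_single[of ?k "\<lambda>_. 2 powr (real ?k * w * q)"] by (simp add: sums_iff)
  then show ?thesis using q_pos by (simp add: besov_norm_def powr_powr)
qed

context
  assumes p_gt_1: "1 < p"
begin

lemma norm_le_besov_norm:
  assumes "f \<in> besov_space w p q"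
  shows "norm (f \<xi>) \<le> 2 powr (- (real (shell_index \<xi>) * w)) * besov_norm w p q f"
proof -
  let ?k = "shell_index \<xi>"
  have "norm (f \<xi>) \<le> 2 powr (- (real ?k * w)) * (2 powr (real ?k * w) * block_norm p f ?k)"
    using norm_le_block_norm[OF shell_index_mem[of \<xi>] p_gt_1, of f] by (simp add: powr_minus field_simps)
  also have "\<dots> \<le> 2 powr (- (real ?k * w)) * besov_norm w p q f"
    by (intro mult_left_mono block_norm_le_besov_norm assms) simp
  finally show ?thesis .
qed

lemma multiplier_besov_term_le:
  fixes a g u :: "int^'n \<Rightarrow> complex"
  assumes "C \<ge> 0" "\<forall>\<xi>. norm (a \<xi>) \<le> C * jbr \<xi> powr m" "m \<le> - real CARD('n)"
    and "\<And>\<xi>. norm (g \<xi>) \<le> norm (a \<xi>) * norm (u \<xi>)"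
  shows "besov_term w p q g k \<le> (8 ^ CARD('n) * C) powr q * besov_term w p q u k"
proof -
  have "block_norm p g k powr q \<le> ((8 ^ CARD('n) * C) * block_norm p u k) powr q"
    using q_pos
    by (intro powr_mono2 multiplier_block_norm_le[OF p_gt_1 assms(1-3)] assms(4))
       (auto simp: Lp_norm_torus_nonneg)
  also have "\<dots> = (8 ^ CARD('n) * C) powr q * block_norm p u k powr q"
    using assms(1) by (simp add: powr_mult Lp_norm_torus_nonneg)
  finally have "block_norm p g k powr q \<le> (8 ^ CARD('n) * C) powr q * block_norm p u k powr q" .
  from mult_left_mono[OF this, of "2 powr (real k * w * q)"] show ?thesis
    unfolding besov_term_def by (simp add: mult_ac)
qed

text \<open>Once the first \<open>J\<close> shells are removed, the remainder is controlled by the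
  Besov tail of \<open>u\<close> beyond \<open>J\<close>.\<close>
lemma besov_norm_multiplier_outside_tendsto:
  fixes a u :: "int^'n \<Rightarrow> complex"
  assumes C: "C \<ge> 0" and aC: "\<forall>\<xi>. norm (a \<xi>) \<le> C * jbr \<xi> powr m" and m: "m \<le> - real CARD('n)"
    and u: "u \<in> besov_space w p q"
    and exhaust: "\<And>J. eventually (\<lambda>K. shells_upto J \<subseteq> S K) sequentially"
  shows "(\<lambda>K. besov_norm w p q (\<lambda>t. if t \<in> S K then 0 else a t * u t)) \<longlonglongrightarrow> 0"
proof -
  define D where "D = 8 ^ CARD('n) * C"
  define R where "R K = (\<lambda>t. if t \<in> S K then 0 else a t * u t)" for K
  have R_le: "besov_norm w p q (R K) \<le> D * besov_norm w p q (freq_tail J u)"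
    if sub: "shells_upto J \<subseteq> S K" for J K
  proof (rule besov_comparison(2)[OF freq_tail_mem[OF u]])
    show "D \<ge> 0" using C by (simp add: D_def)
    fix j
    show "besov_term w p q (R K) j \<le> D powr q * besov_term w p q (freq_tail J u) j"
    proof (cases "j \<le> J")
      case True
      then have "besov_term w p q (R K) j = 0"
        using sub by (intro besov_term_eq_0) (auto simp: R_def shells_upto_def mem_shell_iff)
      then show ?thesis by (simp add: besov_term_nonneg)
    next
      case False
      have "norm (R K \<xi>) \<le> norm (a \<xi>) * norm (u \<xi>)" for \<xi>
        by (simp add: R_def norm_mult)
      from multiplier_besov_term_le[OF C aC m this] False show ?thesis
        by (simp add: besov_term_freq_tail D_def)
    qed
  qed
  have tail: "(\<lambda>J. D * besov_norm w p q (freq_tail J u)) \<longlonglongrightarrow> 0"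
    by (rule tendsto_mult_right_zero[OF besov_norm_freq_tail_tendsto[OF u]])
  show ?thesis
    unfolding R_def[symmetric]
  proof (rule LIMSEQ_I)
    fix \<epsilon> :: real assume "\<epsilon> > 0"
    obtain J where J: "D * besov_norm w p q (freq_tail J u) < \<epsilon>"
      using order_tendstoD(2)[OF tail \<open>\<epsilon> > 0\<close>] by (auto simp: eventually_sequentially)
    obtain K0 where K0: "\<And>K. K \<ge> K0 \<Longrightarrow> shells_upto J \<subseteq> S K"
      using exhaust[of J] by (auto simp: eventually_sequentially)
    show "\<exists>K0. \<forall>K\<ge>K0. norm (besov_norm w p q (R K) - 0) < \<epsilon>"
    proof (intro exI[of _ K0] allI impI)
      fix K assume "K0 \<le> K"
      then have "besov_norm w p q (R K) \<le> D * besov_norm w p q (freq_tail J u)"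
        by (intro R_le K0)
      with J besov_norm_nonneg[of w p q "R K"]
      show "norm (besov_norm w p q (R K) - 0) < \<epsilon>" by simp
    qed
  qed
qed

theorem fourier_mult_r_nuclear:
  fixes a :: "int^'n \<Rightarrow> complex"
  assumes r: "r > 0" and C: "C \<ge> 0" and aC: "\<forall>\<xi>. norm (a \<xi>) \<le> C * jbr \<xi> powr m"
    and m: "m < - real CARD('n)" and mr: "m * r < - real CARD('n)"
  shows "r_nuclear r (besov_space w p q) (besov_norm w p q) (fourier_mult a)"
proof -
  let ?E = "besov_space w p q :: (int^'n \<Rightarrow> complex) set" and ?N = "besov_norm w p q"
  define \<xi> where "\<xi> = (lattice_enum :: nat \<Rightarrow> int^'n)"
  define e where "e k = (\<lambda>u. a (\<xi> k) * u (\<xi> k))" for k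
  define y where "y k = dirac (\<xi> k)" for k
  define b where "b k = 2 powr (- (real (shell_index (\<xi> k)) * w))" for k
  have coef: "\<And>u. u \<in> ?E \<Longrightarrow> norm (u (\<xi> k)) \<le> b k * ?N u" for k
    unfolding b_def by (rule norm_le_besov_norm)
  have eE: "e k \<in> dual_space ?E ?N" for k
    unfolding e_def by (rule besov.evaluation_dual(1)[OF _ coef]) (simp add: b_def)
  have dn: "dual_norm ?E ?N (e k) \<le> norm (a (\<xi> k)) * b k" for k
    unfolding e_def by (rule besov.evaluation_dual(2)[OF _ coef]) (simp add: b_def)
  have yE: "y k \<in> ?E" for k
    by (simp add: y_def dirac_mem)
  have dual_term_le: "dual_norm ?E ?N (e k) powr r * ?N (y k) powr r \<le> C powr r * jbr (\<xi> k) powr (m * r)" for k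
  proof -
    have dn0: "dual_norm ?E ?N (e k) \<ge> 0" by (rule besov.dual_norm_nonneg[OF eE])
    have "b k * ?N (y k) = 1"
      by (simp add: b_def y_def besov_norm_dirac powr_add[symmetric])
    moreover have "dual_norm ?E ?N (e k) * ?N (y k) \<le> norm (a (\<xi> k)) * b k * ?N (y k)"
      by (intro mult_right_mono dn besov_norm_nonneg)
    ultimately have "(dual_norm ?E ?N (e k) * ?N (y k)) powr r \<le> norm (a (\<xi> k)) powr r"
      using r dn0 by (intro powr_mono2) (auto simp: besov_norm_nonneg mult.assoc)
    also have "\<dots> \<le> (C * jbr (\<xi> k) powr m) powr r"
      using aC r by (intro powr_mono2) auto
    finally show ?thesis
      using C dn0 by (simp add: powr_mult powr_powr besov_norm_nonneg)
  qed
  have "(\<lambda>k. C powr r * jbr (\<xi> k) powr (m * r)) summable_on UNIV"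
    using summable_on_reindex_bij_betw[OF bij_lattice_enum, of "\<lambda>\<eta>::int^'n. C powr r * jbr \<eta> powr (m * r)"]
      summable_on_cmult_right[OF summable_on_jbr_powr[OF mr], of "C powr r"]
    by (simp add: \<xi>_def)
  then have "summable (\<lambda>k. C powr r * jbr (\<xi> k) powr (m * r))"
    by (subst summable_on_UNIV_nonneg_real_iff[symmetric]) auto
  then have summable: "summable (\<lambda>k. dual_norm ?E ?N (e k) powr r * ?N (y k) powr r)"
    by (rule summable_comparison_test[rotated]) (auto intro!: exI[of _ 0] simp: dual_term_le)
  have "fourier_mult a u \<in> ?E \<and> (\<lambda>K. ?N (\<lambda>t. fourier_mult a u t - (\<Sum>k<K. e k u * y k t))) \<longlonglongrightarrow> 0"
    if u: "u \<in> ?E" for u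
  proof
    show "fourier_mult a u \<in> ?E"
      using C m by (intro besov_comparison(1)[OF u _ multiplier_besov_term_le[OF C aC]])
        (auto simp: fourier_mult_def norm_mult)
    have "eventually (\<lambda>K. shells_upto J \<subseteq> \<xi> ` {..<K}) sequentially" for J
      unfolding \<xi>_def by (intro eventually_subset_image_lessThan bij_is_surj[OF bij_lattice_enum]) simp
    from besov_norm_multiplier_outside_tendsto[OF C aC _ u this]
    show "(\<lambda>K. ?N (\<lambda>t. fourier_mult a u t - (\<Sum>k<K. e k u * y k t))) \<longlonglongrightarrow> 0"
      using m by (simp add: e_def y_def \<xi>_def fourier_mult_sub_enum_sum)
  qed
  with eE yE summable show ?thesis
    unfolding r_nuclear_def nuclear_rep_def by blast
qed

lemma nuclear_rep_coeff_sums: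
  assumes nr: "nuclear_rep r (besov_space w p q) (besov_norm w p q) (fourier_mult a) e y"
  shows "(\<lambda>k. y k \<xi> * e k (dirac \<xi>)) sums a \<xi>"
proof -
  let ?E = "besov_space w p q" and ?N = "besov_norm w p q"
  define D where "D K = (\<lambda>t. fourier_mult a (dirac \<xi>) t - (\<Sum>k<K. e k (dirac \<xi>) * y k t))" for K
  have yE: "y k \<in> ?E" for k
    using nr by (simp add: nuclear_rep_def)
  have T: "fourier_mult a (dirac \<xi>) \<in> ?E" and conv: "(\<lambda>K. ?N (D K)) \<longlonglongrightarrow> 0"
    using nr dirac_mem[of \<xi>] unfolding nuclear_rep_def D_def by blast+
  have "D K \<in> ?E" for K
    unfolding D_def by (intro besov.diff_mem besov.sum_mem T yE) simp
  moreover have "D K \<xi> = a \<xi> - (\<Sum>k<K. y k \<xi> * e k (dirac \<xi>))" for K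
    by (simp add: D_def fourier_mult_def dirac_def mult.commute)
  ultimately have "norm (a \<xi> - (\<Sum>k<K. y k \<xi> * e k (dirac \<xi>)))
      \<le> 2 powr (- (real (shell_index \<xi>) * w)) * ?N (D K)" for K
    by (metis norm_le_besov_norm)
  then have "(\<lambda>K. a \<xi> - (\<Sum>k<K. y k \<xi> * e k (dirac \<xi>))) \<longlonglongrightarrow> 0"
    by (intro Lim_null_comparison[OF always_eventually tendsto_mult_right_zero[OF conv]]) blast
  from tendsto_diff[OF tendsto_const[of "a \<xi>"] this] show ?thesis
    by (simp add: sums_def)
qed

theorem nuclear_trace_fourier_mult:
  assumes asum: "a summable_on UNIV"
    and nr: "nuclear_rep 1 (besov_space w p q) (besov_norm w p q) (fourier_mult a) e y"
  shows "(\<lambda>k. e k (y k)) sums (\<Sum>\<^sub>\<infinity>\<xi>. a \<xi>)"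
proof -
  let ?E = "besov_space w p q" and ?N = "besov_norm w p q"
  define dn where "dn k = dual_norm ?E ?N (e k)" for k
  have eE: "e k \<in> dual_space ?E ?N" and yE: "y k \<in> ?E" for k
    using nr by (auto simp: nuclear_rep_def)
  have dn0: "dn k \<ge> 0" for k
    unfolding dn_def by (rule besov.dual_norm_nonneg[OF eE])
  have dominated: "summable (\<lambda>k. dn k * ?N (y k))"
    using nr by (simp add: nuclear_rep_def dn_def[symmetric] powr_one dn0 besov_norm_nonneg)
  have rows: "(\<lambda>k. e k (freq_trunc K (y k))) sums (\<Sum>\<xi>\<in>shells_upto K. a \<xi>)" for K
  proof -
    have "e k (freq_trunc K (y k)) = (\<Sum>\<xi>\<in>shells_upto K. y k \<xi> * e k (dirac \<xi>))" for k
      unfolding freq_trunc_eq_sum_dirac by (rule besov.dual_sum[OF eE finite_shells_upto dirac_mem])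
    moreover have "(\<lambda>k. \<Sum>\<xi>\<in>shells_upto K. y k \<xi> * e k (dirac \<xi>)) sums (\<Sum>\<xi>\<in>shells_upto K. a \<xi>)"
      by (rule sums_sum) (rule nuclear_rep_coeff_sums[OF nr])
    ultimately show ?thesis by simp
  qed
  have trunc_tendsto: "(\<lambda>K. e k (freq_trunc K (y k))) \<longlonglongrightarrow> e k (y k)" for k
  proof -
    have split: "e k (freq_trunc K (y k)) = e k (y k) - e k (freq_tail K (y k))" for K
      using besov.dual_add[OF eE[of k] freq_trunc_mem[of K "y k"] freq_tail_mem[OF yE[of k], of K]]
      by (simp add: freq_trunc_add_tail)
    have "(\<lambda>K. e k (freq_tail K (y k))) \<longlonglongrightarrow> 0"
      using besov.dual_norm_bound[OF eE freq_tail_mem[OF yE]]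
      by (intro Lim_null_comparison[OF always_eventually
            tendsto_mult_right_zero[OF besov_norm_freq_tail_tendsto[OF yE]]]) auto
    from tendsto_diff[OF tendsto_const this] show ?thesis
      by (simp add: split)
  qed
  have trunc_bound: "norm (e k (freq_trunc K (y k))) \<le> dn k * ?N (y k)" for k K
    using besov.dual_norm_bound[OF eE freq_trunc_mem] mult_left_mono[OF besov_norm_freq_trunc_le[OF yE] dn0]
    unfolding dn_def by (rule order_trans)
  have "eventually (\<lambda>(k, K). norm (e k (freq_trunc K (y k))) \<le> dn k * ?N (y k)) (at_top \<times>\<^sub>F sequentially)"
    using trunc_bound by (simp add: case_prod_unfold)
  from tannerys_theorem[OF trunc_tendsto this dominated]
  have T: "summable (\<lambda>k. norm (e k (y k))) \<and>
      (\<lambda>K. \<Sum>k. e k (freq_trunc K (y k))) \<longlonglongrightarrow> (\<Sum>k. e k (y k))"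
    by simp
  moreover have "(\<lambda>K. \<Sum>k. e k (freq_trunc K (y k))) = (\<lambda>K. \<Sum>\<xi>\<in>shells_upto K. a \<xi>)"
    using rows by (simp add: sums_iff)
  ultimately have "(\<Sum>k. e k (y k)) = (\<Sum>\<^sub>\<infinity>\<xi>. a \<xi>)"
    using LIMSEQ_unique has_sum_shells_upto_tendsto[OF has_sum_infsum[OF asum]] by metis
  with T show ?thesis
    by (simp add: sums_iff summable_norm_cancel)
qed

end

end

theorem corollary5p2:
  fixes a :: "int^'n \<Rightarrow> complex"
    and r \<alpha> C m p1 q1 :: real
  assumes "0 < r" "r \<le> 1"
    and "0 < \<alpha>" "\<alpha> \<le> 1/2"
    and "\<forall>\<xi>. norm (a \<xi>) \<le> C * (jbr \<xi>) powr m"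
    and "1 < p1" "p1 \<le> 2"
    and "q1 = 1 / (\<alpha> + 1 / (p1 / (p1 - 1)))"
    and "m < - real CARD('n) / r - \<alpha> * real CARD('n)"
  shows "\<forall>w::real.
           r_nuclear r (besov_space w p1 q1) (besov_norm w p1 q1) (fourier_mult a)
         \<and> a summable_on UNIV
         \<and> (\<forall>e y. nuclear_rep 1 (besov_space w p1 q1) (besov_norm w p1 q1) (fourier_mult a) e y
                  \<longrightarrow> (\<lambda>k. e k (y k)) sums (\<Sum>\<^sub>\<infinity>\<xi>. a \<xi>))"
proof -
  note r = assms(1,2) and aC = assms(5) and p = assms(6)
  have p_pos: "0 < p1" using p by simp
  have q_pos: "0 < q1"
    using assms(3,8) p by (simp add: pos_add_strict)
  have C: "C \<ge> 0"
    using aC[rule_format, of 0] jbr_pos[of 0] by (smt (verit) norm_ge_zero powr_gt_zero zero_le_mult_iff)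
  have m_r: "m < - real CARD('n) / r"
    using assms(3,9) by (smt (verit) of_nat_0_le_iff mult_nonneg_nonneg)
  then have mr: "m * r < - real CARD('n)"
    using r(1) by (simp add: field_simps)
  have "real CARD('n) \<le> real CARD('n) / r"
    using r by (simp add: le_divide_eq mult_left_le)
  with m_r have m: "m < - real CARD('n)"
    by linarith
  have asum: "a summable_on UNIV"
    by (rule summable_on_if_norm_le_jbr_powr[OF aC m])
  show ?thesis
    using fourier_mult_r_nuclear[OF p_pos q_pos p r(1) C aC m mr]
      nuclear_trace_fourier_mult[OF p_pos q_pos p asum] asum
    by blast
qed

end
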